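(* The graph $H_7$ has rank cardinality vector $(2,2,2,1)$, and every graph whose rank cardinality vector is $(2,2,2,1)$ is isomorphic to $H_7$.
   Context: All graphs are finite, nonempty, and reflexive (every vertex has a loop). $N[v]$ is the closed neighborhood of $v$ (including $v$). For distinct $v,w$, $w$ strictly corners $v$ if $N[v]\subsetneq N[w]$; $v$ is then a strict corner. Corner ranking: set $G^{(1)}=G$, $k=1$. If $G^{(k)}$ is a clique, give all its vertices rank $k$ and stop. Else if $G^{(k)}$ has no strict corners, give all its vertices rank $\infty$ and stop. Else give every strict corner of $G^{(k)}$ rank $k$, delete them to get $G^{(k+1)}$ (induced subgraph), increase $k$ and repeat. The corner rank is the largest rank of a vertex; $X_k$ is the set of rank-$k$ vertices. The rank cardinality vector of a graph of finite corner rank $\alpha$ is $(x_\alpha,\dots,x_1)$ with $x_k=|X_k|$. $H_7$ is the graph on vertices $a_1,a_2,b_1,b_2,c_1,c_2,d$ with edges $a_1a_2,a_1b_1,a_1b_2,a_2b_1,a_2b_2,a_2c_1,a_1c_2,b_1c_1,b_1c_2,b_1d,b_2c_1,b_2c_2,c_1d,c_2d$. *)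

theory Defs
  imports Main
begin

definition rgraph :: "'a set \<Rightarrow> ('a \<Rightarrow> 'a \<Rightarrow> bool) \<Rightarrow> bool" where
  "rgraph V E \<longleftrightarrow> finite V \<and> V \<noteq> {} \<and> (\<forall>x\<in>V. E x x)
     \<and> (\<forall>x y. E x y \<longrightarrow> x \<in> V \<and> y \<in> V \<and> E y x)"

definition cnbhd :: "'a set \<Rightarrow> ('a \<Rightarrow> 'a \<Rightarrow> bool) \<Rightarrow> 'a \<Rightarrow> 'a set" where
  "cnbhd W E v = {w \<in> W. E v w}"

definition strict_corner :: "'a set \<Rightarrow> ('a \<Rightarrow> 'a \<Rightarrow> bool) \<Rightarrow> 'a \<Rightarrow> bool" where
  "strict_corner W E v \<longleftrightarrow> v \<in> W \<and> (\<exists>w\<in>W. w \<noteq> v \<and> cnbhd W E v \<subset> cnbhd W E w)"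

definition corners :: "'a set \<Rightarrow> ('a \<Rightarrow> 'a \<Rightarrow> bool) \<Rightarrow> 'a set" where
  "corners W E = {v \<in> W. strict_corner W E v}"

definition is_clique :: "'a set \<Rightarrow> ('a \<Rightarrow> 'a \<Rightarrow> bool) \<Rightarrow> bool" where
  "is_clique W E \<longleftrightarrow> (\<forall>x\<in>W. \<forall>y\<in>W. E x y)"

text \<open>stage V E k is the vertex set of G^(k+1) (0-indexed): repeatedly delete all strict corners.\<close>
primrec stage :: "'a set \<Rightarrow> ('a \<Rightarrow> 'a \<Rightarrow> bool) \<Rightarrow> nat \<Rightarrow> 'a set" where
  "stage V E 0 = V"
| "stage V E (Suc k) = stage V E k - corners (stage V E k) E"

text \<open>The ranking terminates with finite ranks iff some G^(k) is a clique
(if G^(k) has no strict corners and is not a clique, the stages become constant).\<close>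
definition finite_corner_rank :: "'a set \<Rightarrow> ('a \<Rightarrow> 'a \<Rightarrow> bool) \<Rightarrow> bool" where
  "finite_corner_rank V E \<longleftrightarrow> (\<exists>k. is_clique (stage V E k) E)"

text \<open>Corner rank alpha: the (1-indexed) first k with G^(k) a clique.\<close>
definition corner_rank :: "'a set \<Rightarrow> ('a \<Rightarrow> 'a \<Rightarrow> bool) \<Rightarrow> nat" where
  "corner_rank V E = Suc (LEAST k. is_clique (stage V E k) E)"

definition rank_set :: "'a set \<Rightarrow> ('a \<Rightarrow> 'a \<Rightarrow> bool) \<Rightarrow> nat \<Rightarrow> 'a set" where
  "rank_set V E k =
     (if 1 \<le> k \<and> k < corner_rank V E then corners (stage V E (k - 1)) E
      else if k = corner_rank V E then stage V E (k - 1) else {})"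

definition rank_card_vector :: "'a set \<Rightarrow> ('a \<Rightarrow> 'a \<Rightarrow> bool) \<Rightarrow> nat list" where
  "rank_card_vector V E = rev (map (\<lambda>k. card (rank_set V E k)) [1..<Suc (corner_rank V E)])"

definition graph_iso :: "'a set \<Rightarrow> ('a \<Rightarrow> 'a \<Rightarrow> bool) \<Rightarrow> 'b set \<Rightarrow> ('b \<Rightarrow> 'b \<Rightarrow> bool) \<Rightarrow> bool" where
  "graph_iso V E V' E' \<longleftrightarrow>
     (\<exists>f. bij_betw f V V' \<and> (\<forall>x\<in>V. \<forall>y\<in>V. E x y \<longleftrightarrow> E' (f x) (f y)))"

datatype h7v = a1 | a2 | b1 | b2 | c1 | c2 | d

definition H7_edges :: "(h7v \<times> h7v) list" where
  "H7_edges = [(a1,a2),(a1,b1),(a1,b2),(a2,b1),(a2,b2),(a2,c1),(a1,c2),(b1,c1),(b1,c2),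
               (b1,d),(b2,c1),(b2,c2),(c1,d),(c2,d)]"

definition H7V :: "h7v set" where
  "H7V = UNIV"

definition H7E :: "h7v \<Rightarrow> h7v \<Rightarrow> bool" where
  "H7E x y \<longleftrightarrow> x = y \<or> (x, y) \<in> set H7_edges \<or> (y, x) \<in> set H7_edges"

end

theory Submission
  imports Defs
begin

text \<open>
  Let the layers of a graph with rank cardinality vector (2,2,2,1) be X_4 = {p,q},
  X_3 = {x,y}, X_2 = {u,v} and X_1 = {z}, so that G^(3) = {p,q,x,y}, G^(2) = G^(3) \<union> {u,v}
  and G = G^(2) \<union> {z}. Corner rank 4 forces p and q to be adjacent, and the requirement
  that the strict corners of each G^(k) are exactly the next layer determines the 20
  remaining adjacencies up to swapping x with y and u with v; every solution is a
  labelling of H_7 (a_i \<mapsto> p,q, b_i \<mapsto> x,y, c_i \<mapsto> u,v, d \<mapsto> z).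
\<close>

lemma strict_corner_iff:
  "strict_corner W E v \<longleftrightarrow>
     v \<in> W \<and> (\<exists>w\<in>W. w \<noteq> v \<and> (\<forall>j\<in>W. E v j \<longrightarrow> E w j) \<and> (\<exists>j\<in>W. E w j \<and> \<not> E v j))"
  unfolding strict_corner_def cnbhd_def by auto

lemma corners_subset: "corners W E \<subseteq> W"
  unfolding corners_def by blast

lemma corners_eq_iff:
  "C \<subseteq> W \<Longrightarrow> corners W E = C \<longleftrightarrow> (\<forall>w\<in>W. strict_corner W E w \<longleftrightarrow> w \<in> C)"
  unfolding corners_def by auto

lemma stage_eq_stage_Suc_Un_corners: "stage V E k = stage V E (Suc k) \<union> corners (stage V E k) E"
  using corners_subset[of "stage V E k" E] by auto

lemma stage_Suc_inter_corners: "stage V E (Suc k) \<inter> corners (stage V E k) E = {}"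
  by auto

lemma corner_rank_eqI:
  assumes "is_clique (stage V E n) E" and "\<And>k. k < n \<Longrightarrow> \<not> is_clique (stage V E k) E"
  shows "corner_rank V E = Suc n"
  unfolding corner_rank_def using assms by (metis Least_equality not_less)

lemma is_clique_stage_corner_rank:
  assumes "finite_corner_rank V E" and "corner_rank V E = Suc n"
  shows "is_clique (stage V E n) E"
  using assms LeastI_ex[of "\<lambda>k. is_clique (stage V E k) E"]
  unfolding finite_corner_rank_def corner_rank_def by simp

lemma length_rank_card_vector: "length (rank_card_vector V E) = corner_rank V E"
  unfolding rank_card_vector_def by simp

lemma rank_card_vector_eq:
  assumes "corner_rank V E = Suc n"
  shows "rank_card_vector V E =
           card (stage V E n) # rev (map (\<lambda>k. card (corners (stage V E k) E)) [0..<n])"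
proof -
  have "[1..<Suc (Suc n)] = map Suc [0..<n] @ [Suc n]"
    by (simp add: map_Suc_upt)
  moreover have "rank_set V E (Suc k) = corners (stage V E k) E" if "k < n" for k
    using that assms by (simp add: rank_set_def)
  moreover have "rank_set V E (Suc n) = stage V E n"
    using assms by (simp add: rank_set_def)
  ultimately show ?thesis
    unfolding rank_card_vector_def assms by simp
qed

lemma rank_card_vector_corner_rank_4:
  assumes "corner_rank V E = 4"
  shows "rank_card_vector V E =
    [card (stage V E 3), card (corners (stage V E 2) E),
     card (corners (stage V E 1) E), card (corners (stage V E 0) E)]"
proof -
  have "[0..<3] = [0, 1, 2 :: nat]"
    by (simp add: upt_rec)
  then show ?thesis
    using rank_card_vector_eq[of V E 3] assms by (simp del: stage.simps One_nat_def)
qed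

lemma UNIV_h7v: "(UNIV :: h7v set) = {a1, a2, b1, b2, c1, c2, d}"
  using h7v.exhaust by auto

lemma all_h7v: "(\<forall>i. P i) \<longleftrightarrow> P a1 \<and> P a2 \<and> P b1 \<and> P b2 \<and> P c1 \<and> P c2 \<and> P d"
  by (metis h7v.exhaust)

lemma H7E_twin_free: "\<forall>k. H7E i k \<longleftrightarrow> H7E j k \<Longrightarrow> i = j"
  by (cases i; cases j; simp add: all_h7v H7E_def H7_edges_def)

lemma rgraph_H7: "rgraph H7V H7E"
proof -
  have "finite H7V"
    by (simp add: H7V_def UNIV_h7v)
  then show ?thesis
    unfolding rgraph_def H7E_def by (auto simp: H7V_def)
qed

lemma corners_H7_stages:
  "corners {a1, a2, b1, b2, c1, c2, d} H7E = {d}"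
  "corners {a1, a2, b1, b2, c1, c2} H7E = {c1, c2}"
  "corners {a1, a2, b1, b2} H7E = {b1, b2}"
  by (auto simp: corners_def strict_corner_iff H7E_def H7_edges_def)

lemma stage_H7:
  "stage H7V H7E 0 = {a1, a2, b1, b2, c1, c2, d}"
  "stage H7V H7E 1 = {a1, a2, b1, b2, c1, c2}"
  "stage H7V H7E 2 = {a1, a2, b1, b2}"
  "stage H7V H7E 3 = {a1, a2}"
  by (simp_all add: eval_nat_numeral H7V_def UNIV_h7v corners_H7_stages insert_Diff_if)

lemma is_clique_stage_3_H7: "is_clique (stage H7V H7E 3) H7E"
  by (simp add: stage_H7 is_clique_def H7E_def H7_edges_def)

lemma not_is_clique_stage_H7:
  assumes "k < 3"
  shows "\<not> is_clique (stage H7V H7E k) H7E"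
proof -
  have "k = 0 \<or> k = 1 \<or> k = 2"
    using assms by linarith
  then have "b1 \<in> stage H7V H7E k \<and> b2 \<in> stage H7V H7E k"
    by (elim disjE) (simp_all only: stage_H7 insert_iff simp_thms)
  then show ?thesis
    unfolding is_clique_def by (auto simp: H7E_def H7_edges_def)
qed

lemma corner_rank_H7: "corner_rank H7V H7E = 4"
  using corner_rank_eqI[OF is_clique_stage_3_H7 not_is_clique_stage_H7] by simp

lemma rank_card_vector_H7: "rank_card_vector H7V H7E = [2, 2, 2, 1]"
  by (simp add: rank_card_vector_corner_rank_4[OF corner_rank_H7] stage_H7 corners_H7_stages
      del: stage.simps One_nat_def)

definition induces_H7 :: "('a \<Rightarrow> 'a \<Rightarrow> bool) \<Rightarrow> (h7v \<Rightarrow> 'a) \<Rightarrow> bool" where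
  "induces_H7 E f \<longleftrightarrow> (\<forall>i j. E (f i) (f j) \<longleftrightarrow> H7E i j)"

lemma graph_iso_H7I:
  assumes "induces_H7 E f" and "range f = V"
  shows "graph_iso V E H7V H7E"
proof -
  have "inj f"
    using assms(1) by (metis H7E_twin_free induces_H7_def injI)
  then have bij: "bij_betw f H7V V"
    using assms(2) by (simp add: bij_betw_def H7V_def)
  let ?g = "the_inv_into H7V f"
  have "bij_betw ?g V H7V"
    using bij by (rule bij_betw_the_inv_into)
  moreover have "E x y \<longleftrightarrow> H7E (?g x) (?g y)" if "x \<in> V" "y \<in> V" for x y
    using assms that bij f_the_inv_into_f_bij_betw unfolding induces_H7_def by metis
  ultimately show ?thesis
    unfolding graph_iso_def by blast
qed

lemma range_case_h7v: "range (case_h7v p q x y u v z) = {p, q, x, y, u, v, z}"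
  by (auto simp: UNIV_h7v)

lemma induces_H7_if_corner_layers:
  assumes sym: "\<And>a b. E a b = E b a"
    and refl: "\<forall>w\<in>{p, q, x, y, u, v, z}. E w w"
    and dist: "distinct [p, q, x, y, u, v, z]"
    and pq: "E p q"
    and "corners {p, q, x, y} E = {x, y}"
    and "corners {p, q, x, y, u, v} E = {u, v}"
    and "corners {p, q, x, y, u, v, z} E = {z}"
  obtains f where "induces_H7 E f" and "range f = {p, q, x, y, u, v, z}"
proof -
  have c2: "\<forall>w\<in>{p, q, x, y}. strict_corner {p, q, x, y} E w \<longleftrightarrow> w \<in> {x, y}"
   and c1: "\<forall>w\<in>{p, q, x, y, u, v}. strict_corner {p, q, x, y, u, v} E w \<longleftrightarrow> w \<in> {u, v}"
   and c0: "\<forall>w\<in>{p, q, x, y, u, v, z}. strict_corner {p, q, x, y, u, v, z} E w \<longleftrightarrow> w \<in> {z}"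
    using assms(5-7) by (simp_all add: corners_eq_iff)
  have "induces_H7 E (case_h7v p q x y u v z) \<or> induces_H7 E (case_h7v p q y x u v z) \<or>
        induces_H7 E (case_h7v p q x y v u z) \<or> induces_H7 E (case_h7v p q y x v u z)"
    unfolding induces_H7_def all_h7v H7E_def H7_edges_def
    \<comment> \<open>The corner conditions go into the conclusion, so that every case split on an
      adjacency simplifies them and prunes the search layer by layer.\<close>
    apply (rule rev_mp[OF c0], rule rev_mp[OF c1], rule rev_mp[OF c2])
    apply (insert refl dist pq)
    apply (simp only: strict_corner_iff)
    apply (cases "E p x"; (simp add: sym)?;
           cases "E q x"; (simp add: sym)?;
           cases "E p y"; (simp add: sym)?;
           cases "E q y"; (simp add: sym)?;
           cases "E x y"; (simp add: sym)?;
           cases "E p u"; (simp add: sym)?;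
           cases "E p v"; (simp add: sym)?;
           cases "E q u"; (simp add: sym)?;
           cases "E q v"; (simp add: sym)?;
           cases "E x u"; (simp add: sym)?;
           cases "E x v"; (simp add: sym)?;
           cases "E y u"; (simp add: sym)?;
           cases "E y v"; (simp add: sym)?;
           cases "E u v"; (simp add: sym)?;
           cases "E p z"; (simp add: sym)?;
           cases "E q z"; (simp add: sym)?;
           cases "E x z"; (simp add: sym)?;
           cases "E y z"; (simp add: sym)?;
           cases "E u z"; (simp add: sym)?;
           cases "E v z"; (simp add: sym)?)
    apply auto
    done
  then show ?thesis
    by (elim disjE) (erule that; auto simp: range_case_h7v)+
qed

lemma graph_iso_H7_if_rank_card_vector:
  assumes graph: "rgraph V E" and "finite_corner_rank V E"
    and vec: "rank_card_vector V E = [2, 2, 2, 1]"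
  shows "graph_iso V E H7V H7E"
proof -
  have rank: "corner_rank V E = 4"
    using length_rank_card_vector[of V E] vec by simp
  then have clique: "is_clique (stage V E 3) E"
    using is_clique_stage_corner_rank[OF assms(2), of 3] by simp
  have cards: "card (stage V E 3) = 2" "card (corners (stage V E 2) E) = 2"
    "card (corners (stage V E 1) E) = 2" "card (corners (stage V E 0) E) = 1"
    using rank_card_vector_corner_rank_4[OF rank] vec by (simp_all del: stage.simps One_nat_def)
  obtain p q where S3: "stage V E 3 = {p, q}" and "p \<noteq> q"
    using card_2_iff[THEN iffD1, OF cards(1)] by blast
  obtain x y where C2: "corners (stage V E 2) E = {x, y}" and "x \<noteq> y"
    using card_2_iff[THEN iffD1, OF cards(2)] by blast
  obtain u v where C1: "corners (stage V E 1) E = {u, v}" and "u \<noteq> v"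
    using card_2_iff[THEN iffD1, OF cards(3)] by blast
  obtain z where C0: "corners (stage V E 0) E = {z}"
    using card_1_singleton_iff[THEN iffD1, OF cards(4)[unfolded One_nat_def]] by blast
  have Suc_2: "Suc 2 = (3 :: nat)"
    by simp
  have S2: "stage V E 2 = {p, q, x, y}" and D2: "{p, q} \<inter> {x, y} = {}"
    using stage_eq_stage_Suc_Un_corners[of V E 2] stage_Suc_inter_corners[of V E 2]
    unfolding Suc_2 S3 C2 by auto
  have S1: "stage V E 1 = {p, q, x, y, u, v}" and D1: "{p, q, x, y} \<inter> {u, v} = {}"
    using stage_eq_stage_Suc_Un_corners[of V E 1] stage_Suc_inter_corners[of V E 1]
    unfolding Suc_1 S2 C1 by auto
  have S0: "V = {p, q, x, y, u, v, z}" and D0: "{p, q, x, y, u, v} \<inter> {z} = {}"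
    using stage_eq_stage_Suc_Un_corners[of V E 0] stage_Suc_inter_corners[of V E 0]
    unfolding One_nat_def[symmetric] S1 C0 by auto
  have "\<And>a b. E a b = E b a" and "\<forall>w\<in>{p, q, x, y, u, v, z}. E w w"
    using graph S0 unfolding rgraph_def by auto
  moreover have "distinct [p, q, x, y, u, v, z]"
    using \<open>p \<noteq> q\<close> \<open>x \<noteq> y\<close> \<open>u \<noteq> v\<close> D2 D1 D0 by auto
  moreover have "E p q"
    using clique S3 unfolding is_clique_def by simp
  ultimately obtain f where "induces_H7 E f" and "range f = V"
    using C2[unfolded S2] C1[unfolded S1] C0[unfolded stage.simps(1) S0] unfolding S0
    by (rule induces_H7_if_corner_layers)
  then show ?thesis
    by (rule graph_iso_H7I)
qed

theorem lemma3p28: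
  shows "(rgraph H7V H7E \<and> finite_corner_rank H7V H7E \<and> rank_card_vector H7V H7E = [2,2,2,1])
    \<and> (\<forall>(V :: 'a set) E. rgraph V E \<and> finite_corner_rank V E \<and>
           rank_card_vector V E = [2,2,2,1] \<longrightarrow> graph_iso V E H7V H7E)"
proof (intro conjI allI impI)
  show "finite_corner_rank H7V H7E"
    unfolding finite_corner_rank_def using is_clique_stage_3_H7 by blast
qed (use rgraph_H7 rank_card_vector_H7 graph_iso_H7_if_rank_card_vector in auto)

end
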